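(* Let $G$ be a locally compact, $\sigma$-compact abelian group acting continuously on a compact metric space $(X,d)$. If the proximal relation $\Pr=\{(x,y):\inf_{t\in G}d(t\cdot x,t\cdot y)=0\}$ is closed in $X\times X$, then $\Pr$ coincides with the complete proximality relation $\sim_{cp}$.
   Context: Let $\mathcal A$ be the collection of subsets $A\subset G$ which contain a translate of every compact subset of $G$. Points $x,y\in X$ are proximal in $A$ if $\inf_{t\in A}d(t\cdot x,t\cdot y)=0$, and completely proximal, $x\sim_{cp}y$, if they are proximal in every $A\in\mathcal A$. *)

theory Defs
  imports "HOL-Analysis.Analysis"
begin

definition group_action :: "('g::ab_group_add \<Rightarrow> 'x \<Rightarrow> 'x) \<Rightarrow> bool" where
  "group_action act \<longleftrightarrow> (\<forall>x. act 0 x = x) \<and> (\<forall>s t x. act (s + t) x = act s (act t x))"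

definition sigma_compact_univ :: "'g::topological_space itself \<Rightarrow> bool" where
  "sigma_compact_univ _ \<longleftrightarrow> (\<exists>K :: nat \<Rightarrow> 'g set. (\<forall>n. compact (K n)) \<and> (\<Union>n. K n) = UNIV)"

definition proximal_in :: "('g \<Rightarrow> 'x::metric_space \<Rightarrow> 'x) \<Rightarrow> 'g set \<Rightarrow> 'x \<Rightarrow> 'x \<Rightarrow> bool" where
  "proximal_in act A x y \<longleftrightarrow> (INF t\<in>A. dist (act t x) (act t y)) = 0"

definition proximal_rel :: "('g \<Rightarrow> 'x::metric_space \<Rightarrow> 'x) \<Rightarrow> ('x \<times> 'x) set" where
  "proximal_rel act = {(x, y). proximal_in act UNIV x y}"

definition thick_sets :: "('g::{topological_space, plus}) set set" where
  "thick_sets = {A. \<forall>K. compact K \<longrightarrow> (\<exists>g. (\<lambda>k. g + k) ` K \<subseteq> A)}"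

definition completely_proximal :: "('g::{topological_space, plus} \<Rightarrow> 'x::metric_space \<Rightarrow> 'x) \<Rightarrow> 'x \<Rightarrow> 'x \<Rightarrow> bool" where
  "completely_proximal act x y \<longleftrightarrow> (\<forall>A\<in>thick_sets. proximal_in act A x y)"

end

theory Submission
  imports Defs
begin

text \<open>
  Every thick set contains a point, so complete proximality implies
  proximality.  Conversely, the proximal relation is invariant under the action, and
  when it is closed in the compact space X \<times> X it is compact.  For e > 0 the open sets
  U_t = {(x, y). d(t x, t y) < e}, t \<in> G, cover it, so finitely many times
  t \<in> K already witness e-closeness of every proximal pair.  Given a proximal pair
  (x, y) and a thick set A, pick g with g + K \<subseteq> A; since (g x, g y) is proximal,
  some t \<in> K gives d((g + t) x, (g + t) y) < e with g + t \<in> A.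
\<close>

lemma proximal_in_iff:
  assumes "A \<noteq> {}"
  shows "proximal_in act A x y \<longleftrightarrow> (\<forall>e>0. \<exists>t\<in>A. dist (act t x) (act t y) < e)"
proof -
  let ?f = "\<lambda>t. dist (act t x) (act t y)"
  have bdd: "bdd_below (?f ` A)" by (rule bdd_belowI[of _ 0]) auto
  have nonneg: "0 \<le> (INF t\<in>A. ?f t)" using assms by (intro cINF_greatest) auto
  have less_iff: "(INF t\<in>A. ?f t) < e \<longleftrightarrow> (\<exists>t\<in>A. ?f t < e)" for e
    using cINF_less_iff[OF assms bdd] by blast
  show ?thesis
  proof
    assume "proximal_in act A x y"
    then show "\<forall>e>0. \<exists>t\<in>A. ?f t < e"
      unfolding proximal_in_def using less_iff by auto
  next
    assume small: "\<forall>e>0. \<exists>t\<in>A. ?f t < e"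
    have "\<not> (INF t\<in>A. ?f t) > 0"
    proof
      assume "(INF t\<in>A. ?f t) > 0"
      then obtain t where "t \<in> A" "?f t < (INF t\<in>A. ?f t)" using small by blast
      then show False using cINF_lower[OF bdd, of t] by simp
    qed
    then show "proximal_in act A x y" unfolding proximal_in_def using nonneg by simp
  qed
qed

lemma proximal_rel_iff:
  "(x, y) \<in> proximal_rel act \<longleftrightarrow> (\<forall>e>0. \<exists>t. dist (act t x) (act t y) < e)"
  unfolding proximal_rel_def using proximal_in_iff[of UNIV act x y] by auto

lemma thick_set_nonempty:
  fixes A :: "'g::{topological_space, monoid_add} set"
  assumes "A \<in> thick_sets"
  shows "A \<noteq> {}"
proof -
  have "compact {0 :: 'g}" by simp
  then obtain g where "(\<lambda>k. g + k) ` {0 :: 'g} \<subseteq> A"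
    using assms unfolding thick_sets_def by blast
  then show ?thesis by auto
qed

lemma completely_proximal_imp_proximal:
  assumes "completely_proximal act x y"
  shows "(x, y) \<in> proximal_rel act"
proof -
  have "UNIV \<in> thick_sets" unfolding thick_sets_def by auto
  then show ?thesis using assms unfolding completely_proximal_def proximal_rel_def by auto
qed

lemma proximal_rel_invariant:
  assumes "group_action act" and "(x, y) \<in> proximal_rel act"
  shows "(act g x, act g y) \<in> proximal_rel act"
  unfolding proximal_rel_iff
proof (intro allI impI)
  fix e :: real
  assume "e > 0"
  then obtain t where close: "dist (act t x) (act t y) < e"
    using assms(2) unfolding proximal_rel_iff by blast
  have "act (t - g) (act g z) = act t z" for z
  proof -
    have "act ((t - g) + g) z = act (t - g) (act g z)"
      using assms(1) unfolding group_action_def by blast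
    then show ?thesis by simp
  qed
  then have "dist (act (t - g) (act g x)) (act (t - g) (act g y)) < e"
    using close by simp
  then show "\<exists>s. dist (act s (act g x)) (act s (act g y)) < e" by blast
qed

lemma continuous_action_slice:
  assumes "continuous_on UNIV (\<lambda>p :: 'g::topological_space \<times> 'x::topological_space. act (fst p) (snd p))"
  shows "continuous_on UNIV (act t)"
proof -
  have "continuous_on UNIV (\<lambda>x::'x. (t, x))" by (intro continuous_intros)
  then have "continuous_on UNIV (\<lambda>x::'x. act (fst (t, x)) (snd (t, x)))"
    by (rule continuous_on_compose2[OF assms]) auto
  then show ?thesis by simp
qed

text \<open>
  Uniformity: on a compact family S of proximal pairs, finitely many group elements
  suffice to witness e-closeness of every pair (compactness of S applied to the open
  cover by the sets where a fixed t brings the pair e-close).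
\<close>
lemma proximal_finite_witnesses:
  fixes act :: "'g \<Rightarrow> 'x::metric_space \<Rightarrow> 'x"
  assumes cont: "\<And>t. continuous_on UNIV (act t)"
    and "compact S" and "S \<subseteq> proximal_rel act" and "e > 0"
  obtains K where "finite K" "\<And>x y. (x, y) \<in> S \<Longrightarrow> \<exists>t\<in>K. dist (act t x) (act t y) < e"
proof -
  let ?U = "\<lambda>t. {p. dist (act t (fst p)) (act t (snd p)) < e}"
  have open_U: "open (?U t)" for t
  proof (rule open_Collect_less)
    have "continuous_on UNIV (\<lambda>p::'x \<times> 'x. act t (fst p))"
      by (rule continuous_on_compose2[OF cont continuous_on_fst]) auto
    moreover have "continuous_on UNIV (\<lambda>p::'x \<times> 'x. act t (snd p))"
      by (rule continuous_on_compose2[OF cont continuous_on_snd]) auto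
    ultimately show "continuous_on UNIV (\<lambda>p. dist (act t (fst p)) (act t (snd p)))"
      by (rule continuous_on_dist)
  qed (rule continuous_on_const)
  have cover: "S \<subseteq> (\<Union>t\<in>UNIV. ?U t)"
  proof
    fix p assume "p \<in> S"
    then obtain t where "dist (act t (fst p)) (act t (snd p)) < e"
      using assms(3,4) proximal_rel_iff[of "fst p" "snd p" act] by auto
    then show "p \<in> (\<Union>t\<in>UNIV. ?U t)" by auto
  qed
  obtain K where "finite K" and K_cover: "S \<subseteq> (\<Union>t\<in>K. ?U t)"
    by (rule compactE_image[OF assms(2) open_U cover]) blast
  moreover have "\<exists>t\<in>K. dist (act t x) (act t y) < e" if "(x, y) \<in> S" for x y
    using subsetD[OF K_cover that] by auto
  ultimately show ?thesis using that by blast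
qed

text \<open>
  The finite witness set K is translated into A by some g, and the
  invariance of proximality transports the witness back to (x, y).
\<close>
lemma proximal_imp_completely_proximal:
  fixes act :: "'g::{topological_ab_group_add} \<Rightarrow> 'x::metric_space \<Rightarrow> 'x"
  assumes action: "group_action act"
    and cont: "\<And>t. continuous_on UNIV (act t)"
    and compact_prox: "compact (proximal_rel act)"
    and prox: "(x, y) \<in> proximal_rel act"
  shows "completely_proximal act x y"
  unfolding completely_proximal_def
proof
  fix A :: "'g set"
  assume thick: "A \<in> thick_sets"
  show "proximal_in act A x y"
    unfolding proximal_in_iff[OF thick_set_nonempty[OF thick]]
  proof (intro allI impI)
    fix e :: real
    assume "e > 0"
    then obtain K where "finite K"
      and witness: "\<And>u v. (u, v) \<in> proximal_rel act \<Longrightarrow> \<exists>t\<in>K. dist (act t u) (act t v) < e"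
      using proximal_finite_witnesses[OF cont compact_prox order_refl] by metis
    then obtain g where translate: "(\<lambda>k. g + k) ` K \<subseteq> A"
      using thick finite_imp_compact[OF \<open>finite K\<close>] unfolding thick_sets_def by blast
    obtain t where "t \<in> K" and close: "dist (act t (act g x)) (act t (act g y)) < e"
      using witness[OF proximal_rel_invariant[OF action prox]] by blast
    have "act (g + t) z = act t (act g z)" for z
    proof -
      have "act (t + g) z = act t (act g z)"
        using action unfolding group_action_def by blast
      then show ?thesis by (simp add: add.commute)
    qed
    then have "dist (act (g + t) x) (act (g + t) y) < e"
      using close by simp
    moreover have "g + t \<in> A"
      using translate \<open>t \<in> K\<close> by auto
    ultimately show "\<exists>s\<in>A. dist (act s x) (act s y) < e" by blast
  qed
qed

theorem mainTheorem18:
  fixes act :: "'g::{topological_ab_group_add, t2_space} \<Rightarrow> 'x::metric_space \<Rightarrow> 'x"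
  assumes "locally_compact_space (euclidean :: 'g topology)"
    and "sigma_compact_univ TYPE('g)"
    and "compact (UNIV :: 'x set)"
    and "group_action act"
    and "continuous_on UNIV (\<lambda>p :: 'g \<times> 'x. act (fst p) (snd p))"
    and "closed (proximal_rel act)"
  shows "proximal_rel act = {(x, y). completely_proximal act x y}"
proof -
  have "compact (proximal_rel act)"
    using closed_Int_compact[OF assms(6) compact_Times[OF assms(3) assms(3)]] by simp
  then have "(x, y) \<in> proximal_rel act \<Longrightarrow> completely_proximal act x y" for x y
    using proximal_imp_completely_proximal[OF assms(4) continuous_action_slice[OF assms(5)]]
    by blast
  then show ?thesis using completely_proximal_imp_proximal by auto
qed

end
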